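(* Let $n\in\omega$ and for each $u\in2^n$ let $X_u\subseteq\mathcal D$ be a nonempty $\mathrm{OD}$ set. Assume that for every neighbouring pair $u,v\in2^n$ an $\mathrm{OD}$ set $R_{uv}\subseteq\mathcal D^2$ is given such that $X_u\,R_{uv}\,X_v$. (1) If $u_0\in2^n$ and $X'\subseteq X_{u_0}$ is a nonempty $\mathrm{OD}$ set, then there is a system of nonempty $\mathrm{OD}$ sets $Y_u\subseteq X_u$ ($u\in2^n$) such that $Y_u\,R_{uv}\,Y_v$ for all neighbouring pairs $u,v$, and $Y_{u_0}=X'$. (2) If $u_0,v_0\in2^n$ is a neighbouring pair and nonempty $\mathrm{OD}$ sets $X'\subseteq X_{u_0}$, $X''\subseteq X_{v_0}$ satisfy $X'\,R_{u_0v_0}\,X''$, then there is a system of nonempty $\mathrm{OD}$ sets $Y_u\subseteq X_u$ ($u\in2^n$) such that $Y_u\,R_{uv}\,Y_v$ for all neighbouring pairs $u,v$, and $Y_{u_0}=X'$, $Y_{v_0}=X''$.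
   Context: $\mathcal D=2^\omega$. For $u,v\in2^n$, the ordered pair $\langle u,v\rangle$ is a neighbouring pair iff $u=0^k{}^\frown0^\frown r$ and $v=0^k{}^\frown1^\frown r$ for some $k<n$ and some $r\in2^{n-k-1}$, where $0^k$ is the sequence of $k$ zeros. For sets $X,Y$ and a binary relation $R$, $X\,R\,Y$ means: $\forall x\in X\,\exists y\in Y\,(x\,R\,y)$ and $\forall y\in Y\,\exists x\in X\,(x\,R\,y)$. *)

theory Defs
  imports Main
begin

text \<open>The Baire/Cantor space D = 2^omega is modelled as nat => bool; finite binary
  sequences u in 2^n are bool lists of length n (False = 0, True = 1).\<close>

type_synonym cantor = "nat \<Rightarrow> bool"

definition neighbouring :: "nat \<Rightarrow> bool list \<Rightarrow> bool list \<Rightarrow> bool" where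
  "neighbouring n u v \<longleftrightarrow>
     (\<exists>k r. k < n \<and> length r = n - k - 1 \<and>
        u = replicate k False @ [False] @ r \<and> v = replicate k False @ [True] @ r)"

definition rel_between :: "'a set \<Rightarrow> ('a \<times> 'b) set \<Rightarrow> 'b set \<Rightarrow> bool" where
  "rel_between X R Y \<longleftrightarrow>
     (\<forall>x\<in>X. \<exists>y\<in>Y. (x, y) \<in> R) \<and> (\<forall>y\<in>Y. \<exists>x\<in>X. (x, y) \<in> R)"

end

theory Submission imports Defs begin

text \<open>The neighbouring pairs form a tree on \<open>2\<^sup>n\<close>: those of length \<open>n + 1\<close> are the pairs of
  the two halves \<open>{u @ [False]}\<close> and \<open>{u @ [True]}\<close>, each a copy of \<open>2\<^sup>n\<close>, plus the single
  bridge from \<open>0\<^sup>n @ [False]\<close> to \<open>0\<^sup>n @ [True]\<close>. So we induct on \<open>n\<close>: refine the half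
  containing the prescribed sets, carry its set at \<open>0\<^sup>n\<close> across the bridge as the \<open>R\<close>-image
  (or preimage) intersected with \<open>X\<close>, and refine the other half from that seed. Nonemptiness
  propagates from the prescribed sets along the relations.\<close>

lemma neighbouring_snoc: "neighbouring n u v \<Longrightarrow> neighbouring (Suc n) (u @ [b]) (v @ [b])"
  unfolding neighbouring_def
proof (elim exE conjE)
  fix k r assume "k < n" "length r = n - k - 1"
    "u = replicate k False @ [False] @ r" "v = replicate k False @ [True] @ r"
  then show "\<exists>k r. k < Suc n \<and> length r = Suc n - k - 1 \<and>
      u @ [b] = replicate k False @ [False] @ r \<and> v @ [b] = replicate k False @ [True] @ r"
    by (intro exI[of _ k] exI[of _ "r @ [b]"]) auto
qed

lemma neighbouring_bridge:
  "neighbouring (Suc n) (replicate n False @ [False]) (replicate n False @ [True])"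
  unfolding neighbouring_def by (intro exI[of _ n] exI[of _ "[]"]) auto

lemma neighbouring_SucE:
  assumes "neighbouring (Suc n) u v"
  obtains u' v' b where "u = u' @ [b]" "v = v' @ [b]" "neighbouring n u' v'"
  | "u = replicate n False @ [False]" "v = replicate n False @ [True]"
proof -
  from assms obtain k r where k: "k < Suc n" "length r = n - k"
    and u: "u = replicate k False @ [False] @ r" and v: "v = replicate k False @ [True] @ r"
    by (auto simp: neighbouring_def)
  show ?thesis
  proof (cases "k = n")
    case True
    with k have "r = []" by simp
    with True u v show ?thesis by (intro that(2)) simp_all
  next
    case False
    with k have "r \<noteq> []" by auto
    then obtain r' b where r: "r = r' @ [b]"
      by (metis rev_exhaust)
    have "neighbouring n (replicate k False @ [False] @ r') (replicate k False @ [True] @ r')"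
      unfolding neighbouring_def using k False r by (intro exI[of _ k] exI[of _ r']) auto
    with u v r show ?thesis by (intro that(1)) simp_all
  qed
qed

lemma rel_between_Image:
  "rel_between X R Y \<Longrightarrow> A \<subseteq> X \<Longrightarrow> rel_between A R (R `` A \<inter> Y)"
  unfolding rel_between_def by blast

lemma rel_between_Image_Int_nonempty:
  "rel_between X R Y \<Longrightarrow> A \<subseteq> X \<Longrightarrow> A \<noteq> {} \<Longrightarrow> R `` A \<inter> Y \<noteq> {}"
  unfolding rel_between_def by blast

lemma rel_between_converse: "rel_between Y (R\<inverse>) X \<longleftrightarrow> rel_between X R Y"
  unfolding rel_between_def by blast

definition half :: "(bool list \<Rightarrow> 'a) \<Rightarrow> bool \<Rightarrow> bool list \<Rightarrow> 'a" where
  "half Y b u = Y (u @ [b])"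

definition half_rel :: "(bool list \<Rightarrow> bool list \<Rightarrow> 'r) \<Rightarrow> bool \<Rightarrow> bool list \<Rightarrow> bool list \<Rightarrow> 'r" where
  "half_rel R b u v = R (u @ [b]) (v @ [b])"

definition glue :: "(bool list \<Rightarrow> 'a) \<Rightarrow> (bool list \<Rightarrow> 'a) \<Rightarrow> bool list \<Rightarrow> 'a" where
  "glue Y0 Y1 u = (if last u then Y1 (butlast u) else Y0 (butlast u))"

lemma half_glue: "half (glue Y0 Y1) b = (if b then Y1 else Y0)"
  by (auto simp: half_def glue_def)

locale od_closed =
  fixes ODs :: "'a set \<Rightarrow> bool" and ODr :: "('a \<times> 'a) set \<Rightarrow> bool"
  assumes OD_Int: "\<And>A B. ODs A \<Longrightarrow> ODs B \<Longrightarrow> ODs (A \<inter> B)"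
    and OD_Image: "\<And>S A. ODr S \<Longrightarrow> ODs A \<Longrightarrow> ODs (S `` A)"
    and OD_Image_conv: "\<And>S A. ODr S \<Longrightarrow> ODs A \<Longrightarrow> ODs (S\<inverse> `` A)"
begin

definition od_system :: "nat \<Rightarrow> (bool list \<Rightarrow> 'a set) \<Rightarrow> (bool list \<Rightarrow> bool list \<Rightarrow> ('a \<times> 'a) set) \<Rightarrow> bool"
  where "od_system n X R \<longleftrightarrow>
    (\<forall>u. length u = n \<longrightarrow> ODs (X u)) \<and>
    (\<forall>u v. neighbouring n u v \<longrightarrow> ODr (R u v) \<and> rel_between (X u) (R u v) (X v))"

definition refines :: "nat \<Rightarrow> (bool list \<Rightarrow> 'a set) \<Rightarrow> (bool list \<Rightarrow> bool list \<Rightarrow> ('a \<times> 'a) set) \<Rightarrow>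
    (bool list \<Rightarrow> 'a set) \<Rightarrow> bool"
  where "refines n X R Y \<longleftrightarrow>
    (\<forall>u. length u = n \<longrightarrow> Y u \<noteq> {} \<and> ODs (Y u) \<and> Y u \<subseteq> X u) \<and>
    (\<forall>u v. neighbouring n u v \<longrightarrow> rel_between (Y u) (R u v) (Y v))"

lemma od_system_half: "od_system (Suc n) X R \<Longrightarrow> od_system n (half X b) (half_rel R b)"
  unfolding od_system_def half_def half_rel_def by (simp add: neighbouring_snoc)

lemma od_system_bridge:
  assumes "od_system (Suc n) X R"
  defines "z \<equiv> replicate n False"
  shows "ODr (R (z @ [False]) (z @ [True]))"
    and "rel_between (X (z @ [False])) (R (z @ [False]) (z @ [True])) (X (z @ [True]))"
  using assms neighbouring_bridge unfolding od_system_def by blast+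

lemma refines_glue:
  assumes "refines n (half X False) (half_rel R False) Y0"
    and "refines n (half X True) (half_rel R True) Y1"
    and "rel_between (Y0 (replicate n False)) (R (replicate n False @ [False]) (replicate n False @ [True]))
           (Y1 (replicate n False))"
  shows "refines (Suc n) X R (glue Y0 Y1)"
  unfolding refines_def
proof (rule conjI; intro allI impI)
  fix u :: "bool list" assume "length u = Suc n"
  then obtain u' b where "u = u' @ [b]" "length u' = n"
    by (auto simp: length_Suc_conv_rev)
  with assms(1,2) show "glue Y0 Y1 u \<noteq> {} \<and> ODs (glue Y0 Y1 u) \<and> glue Y0 Y1 u \<subseteq> X u"
    by (cases b) (auto simp: refines_def glue_def half_def)
next
  fix u v assume "neighbouring (Suc n) u v"
  then show "rel_between (glue Y0 Y1 u) (R u v) (glue Y0 Y1 v)"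
  proof (cases rule: neighbouring_SucE)
    case (1 u' v' b)
    with assms(1,2) show ?thesis
      by (cases b) (auto simp: refines_def glue_def half_rel_def)
  qed (use assms(3) in \<open>simp add: glue_def\<close>)
qed

text \<open>\<open>seed\<close> is the one-seed case of the theorem for the other half, supplied by the induction.\<close>

lemma refinement_extend_half:
  assumes sys: "od_system (Suc n) X R"
    and Yb: "refines n (half X b) (half_rel R b) Yb"
    and seed: "\<And>W. W \<subseteq> half X (\<not> b) (replicate n False) \<Longrightarrow> W \<noteq> {} \<Longrightarrow> ODs W \<Longrightarrow>
      \<exists>Y'. refines n (half X (\<not> b)) (half_rel R (\<not> b)) Y' \<and> Y' (replicate n False) = W"
  shows "\<exists>Y. refines (Suc n) X R Y \<and> half Y b = Yb"
proof -
  define z where "z = replicate n False"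
  define S where "S = R (z @ [False]) (z @ [True])"
  have S: "ODr S" "rel_between (X (z @ [False])) S (X (z @ [True]))"
    using od_system_bridge[OF sys] unfolding S_def z_def by auto
  have X_z: "ODs (X (z @ [c]))" for c
    using sys unfolding od_system_def z_def by auto
  have Yb_z: "Yb z \<subseteq> X (z @ [b])" "Yb z \<noteq> {}" "ODs (Yb z)"
    using Yb unfolding refines_def half_def z_def by auto
  show ?thesis
  proof (cases b)
    case False
    define W where "W = S `` Yb z \<inter> X (z @ [True])"
    have "Yb z \<subseteq> X (z @ [False])"
      using False Yb_z(1) by simp
    then have W: "W \<subseteq> half X True z" "W \<noteq> {}" "ODs W" "rel_between (Yb z) S W"
      using rel_between_Image_Int_nonempty[OF S(2)] rel_between_Image[OF S(2)] Yb_z(2,3) S(1) X_z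
        OD_Int OD_Image
      unfolding W_def half_def by auto
    obtain Y1 where "refines n (half X True) (half_rel R True) Y1" "Y1 z = W"
      using seed W False unfolding z_def by auto
    with False Yb W(4) have "refines (Suc n) X R (glue Yb Y1)"
      by (intro refines_glue) (simp_all add: S_def z_def)
    with False show ?thesis by (intro exI[of _ "glue Yb Y1"]) (simp add: half_glue)
  next
    case True
    define W where "W = S\<inverse> `` Yb z \<inter> X (z @ [False])"
    have S': "rel_between (X (z @ [True])) (S\<inverse>) (X (z @ [False]))"
      using S(2) by (simp add: rel_between_converse)
    have "Yb z \<subseteq> X (z @ [True])"
      using True Yb_z(1) by simp
    then have W: "W \<subseteq> half X False z" "W \<noteq> {}" "ODs W" "rel_between W S (Yb z)"
      using rel_between_Image_Int_nonempty[OF S'] rel_between_Image[OF S'] Yb_z(2,3) S(1) X_z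
        OD_Int OD_Image_conv rel_between_converse[of "Yb z" S W]
      unfolding W_def half_def by auto
    obtain Y0 where "refines n (half X False) (half_rel R False) Y0" "Y0 z = W"
      using seed W True unfolding z_def by auto
    with True Yb W(4) have "refines (Suc n) X R (glue Y0 Yb)"
      by (intro refines_glue) (simp_all add: S_def z_def)
    with True show ?thesis by (intro exI[of _ "glue Y0 Yb"]) (simp add: half_glue)
  qed
qed

lemma exists_refinement_with_seed:
  "od_system n X R \<Longrightarrow> length u0 = n \<Longrightarrow> X' \<subseteq> X u0 \<Longrightarrow> X' \<noteq> {} \<Longrightarrow> ODs X' \<Longrightarrow>
    \<exists>Y. refines n X R Y \<and> Y u0 = X'"
proof (induction n arbitrary: X R u0 X')
  case 0
  then have "refines 0 X R (\<lambda>_. X')"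
    by (simp add: refines_def neighbouring_def)
  with \<open>length u0 = 0\<close> show ?case
    by blast
next
  case (Suc n)
  then obtain u b where u0: "u0 = u @ [b]" "length u = n"
    by (auto simp: length_Suc_conv_rev)
  have "X' \<subseteq> half X b u"
    using Suc.prems(3) u0(1) by (simp add: half_def)
  then obtain Yb where Yb: "refines n (half X b) (half_rel R b) Yb" "Yb u = X'"
    using Suc.IH[OF od_system_half[OF Suc.prems(1)] u0(2)] Suc.prems(4,5) by blast
  obtain Y where "refines (Suc n) X R Y" "half Y b = Yb"
    using refinement_extend_half[OF Suc.prems(1) Yb(1)
        Suc.IH[OF od_system_half[OF Suc.prems(1)] length_replicate]] by blast
  moreover have "Y u0 = half Y b u"
    by (simp add: u0(1) half_def)
  ultimately show ?case
    using Yb(2) by auto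
qed

lemma exists_refinement_with_seed_pair:
  "od_system n X R \<Longrightarrow> neighbouring n u0 v0 \<Longrightarrow>
    X' \<subseteq> X u0 \<Longrightarrow> X' \<noteq> {} \<Longrightarrow> ODs X' \<Longrightarrow> X'' \<subseteq> X v0 \<Longrightarrow> X'' \<noteq> {} \<Longrightarrow> ODs X'' \<Longrightarrow>
    rel_between X' (R u0 v0) X'' \<Longrightarrow> \<exists>Y. refines n X R Y \<and> Y u0 = X' \<and> Y v0 = X''"
proof (induction n arbitrary: X R u0 v0 X' X'')
  case 0
  then show ?case by (simp add: neighbouring_def)
next
  case (Suc n)
  have halves: "od_system n (half X c) (half_rel R c)" for c
    using od_system_half[OF Suc.prems(1)] .
  from Suc.prems(2) show ?case
  proof (cases rule: neighbouring_SucE)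
    case (1 u v b)
    have seeds: "X' \<subseteq> half X b u" "X'' \<subseteq> half X b v" "rel_between X' (half_rel R b u v) X''"
      using Suc.prems(3,6,9) by (simp_all add: 1 half_def half_rel_def)
    obtain Yb where Yb: "refines n (half X b) (half_rel R b) Yb" "Yb u = X'" "Yb v = X''"
      using Suc.IH[OF halves 1(3) seeds(1) Suc.prems(4,5) seeds(2) Suc.prems(7,8) seeds(3)] by blast
    obtain Y where "refines (Suc n) X R Y" "half Y b = Yb"
      using refinement_extend_half[OF Suc.prems(1) Yb(1)
          exists_refinement_with_seed[OF halves length_replicate]] by blast
    moreover have "Y u0 = half Y b u" "Y v0 = half Y b v"
      by (simp_all add: 1 half_def)
    ultimately show ?thesis
      using Yb(2,3) by auto
  next
    case 2
    define z where "z = replicate n False"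
    have z: "length z = n"
      by (simp add: z_def)
    have seeds: "X' \<subseteq> half X False z" "X'' \<subseteq> half X True z"
      using Suc.prems(3,6) by (simp_all add: 2 half_def z_def)
    obtain Y0 where Y0: "refines n (half X False) (half_rel R False) Y0" "Y0 z = X'"
      using exists_refinement_with_seed[OF halves z seeds(1) Suc.prems(4,5)] by blast
    obtain Y1 where Y1: "refines n (half X True) (half_rel R True) Y1" "Y1 z = X''"
      using exists_refinement_with_seed[OF halves z seeds(2) Suc.prems(7,8)] by blast
    have "refines (Suc n) X R (glue Y0 Y1)"
      using refines_glue[OF Y0(1) Y1(1)] Suc.prems(9) Y0(2) Y1(2) by (simp add: 2 z_def)
    moreover have "glue Y0 Y1 u0 = X'" "glue Y0 Y1 v0 = X''"
      using Y0(2) Y1(2) by (simp_all add: 2 glue_def z_def)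
    ultimately show ?thesis
      by auto
  qed
qed

end

theorem lemma4p3:
  fixes ODs :: "cantor set \<Rightarrow> bool"
    and ODr :: "(cantor \<times> cantor) set \<Rightarrow> bool"
    and n :: nat
    and X :: "bool list \<Rightarrow> cantor set"
    and R :: "bool list \<Rightarrow> bool list \<Rightarrow> (cantor \<times> cantor) set"
  assumes OD_Int: "\<And>A B. ODs A \<Longrightarrow> ODs B \<Longrightarrow> ODs (A \<inter> B)"
    and OD_Image: "\<And>S A. ODr S \<Longrightarrow> ODs A \<Longrightarrow> ODs (S `` A)"
    and OD_Image_conv: "\<And>S A. ODr S \<Longrightarrow> ODs A \<Longrightarrow> ODs (S\<inverse> `` A)"
    and X: "\<And>u. length u = n \<Longrightarrow> X u \<noteq> {} \<and> ODs (X u)"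
    and R: "\<And>u v. neighbouring n u v \<Longrightarrow> ODr (R u v) \<and> rel_between (X u) (R u v) (X v)"
  shows "(\<forall>u0 X'. length u0 = n \<longrightarrow> X' \<subseteq> X u0 \<longrightarrow> X' \<noteq> {} \<longrightarrow> ODs X' \<longrightarrow>
            (\<exists>Y. (\<forall>u. length u = n \<longrightarrow> Y u \<noteq> {} \<and> ODs (Y u) \<and> Y u \<subseteq> X u) \<and>
                 (\<forall>u v. neighbouring n u v \<longrightarrow> rel_between (Y u) (R u v) (Y v)) \<and>
                 Y u0 = X'))
       \<and> (\<forall>u0 v0 X' X''. neighbouring n u0 v0 \<longrightarrow>
            X' \<subseteq> X u0 \<longrightarrow> X' \<noteq> {} \<longrightarrow> ODs X' \<longrightarrow>
            X'' \<subseteq> X v0 \<longrightarrow> X'' \<noteq> {} \<longrightarrow> ODs X'' \<longrightarrow>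
            rel_between X' (R u0 v0) X'' \<longrightarrow>
            (\<exists>Y. (\<forall>u. length u = n \<longrightarrow> Y u \<noteq> {} \<and> ODs (Y u) \<and> Y u \<subseteq> X u) \<and>
                 (\<forall>u v. neighbouring n u v \<longrightarrow> rel_between (Y u) (R u v) (Y v)) \<and>
                 Y u0 = X' \<and> Y v0 = X''))"
proof -
  interpret od_closed ODs ODr
    using OD_Int OD_Image OD_Image_conv by unfold_locales auto
  have sys: "od_system n X R"
    unfolding od_system_def using X R by blast
  show ?thesis
    apply (intro conjI allI impI)
    subgoal for u0 X'
      using exists_refinement_with_seed[OF sys, of u0 X'] unfolding refines_def by blast
    subgoal for u0 v0 X' X''
      using exists_refinement_with_seed_pair[OF sys, of u0 v0 X' X''] unfolding refines_def by blast
    done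
qed

end
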